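(* Let $(G^{(m)})_{m\ge1}$ be a sequence of finite simple graphs, and for each $m$ let $C_m\subseteq V(G^{(m)})$ be a clique (a set of pairwise adjacent vertices) in $G^{(m)}$. Let $S_m\subseteq C_m$ be the set of non-gateway vertices of $C_m$, and suppose $|S_m|\to\infty$ as $m\to\infty$. Let $x_m\in S_m$. Then for every fixed $t\ge0$, $$\lim_{m\to\infty}P^{x_m}_{G^{(m)},t}(x_m)=1.$$
   Context: For a finite simple graph $G$, $L_G=D_G-A_G$ is its Laplacian ($A_G$ adjacency matrix, $D_G$ diagonal degree matrix). The continuous-time quantum walk (CTQW) on $G$ has evolution operator $U_{G,t}=e^{\sqrt{-1}\,tL_G}$ ($t\ge0$), and the transition probability is $P^x_{G,t}(y)=|(U_{G,t})_{x,y}|^2$ for $x,y\in V(G)$. If $C$ is a clique in $G$, a vertex $v\in C$ is a gateway vertex of $C$ if there is an edge $(v,w)$ of $G$ with $w\in V(G)\setminus C$; the number of gateway vertices is $n_g$ and $|C|=n_c$, so $|S|=n_c-n_g$ for the set $S$ of non-gateway vertices. *)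

theory Defs
  imports Complex_Main
begin

definition simple_graph :: "'a set \<Rightarrow> ('a \<Rightarrow> 'a \<Rightarrow> bool) \<Rightarrow> bool" where
  "simple_graph V E \<longleftrightarrow> finite V \<and> (\<forall>x y. E x y \<longrightarrow> E y x)
     \<and> (\<forall>x. \<not> E x x) \<and> (\<forall>x y. E x y \<longrightarrow> x \<in> V \<and> y \<in> V)"

definition degree :: "'a set \<Rightarrow> ('a \<Rightarrow> 'a \<Rightarrow> bool) \<Rightarrow> 'a \<Rightarrow> nat" where
  "degree V E x = card {y \<in> V. E x y}"

definition laplacian :: "'a set \<Rightarrow> ('a \<Rightarrow> 'a \<Rightarrow> bool) \<Rightarrow> 'a \<Rightarrow> 'a \<Rightarrow> complex" where
  "laplacian V E x y =
     (if x = y then of_nat (degree V E x) else 0) - (if E x y then 1 else 0)"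

fun mat_pow :: "'a set \<Rightarrow> ('a \<Rightarrow> 'a \<Rightarrow> complex) \<Rightarrow> nat \<Rightarrow> 'a \<Rightarrow> 'a \<Rightarrow> complex" where
  "mat_pow V M 0 x y = (if x = y then 1 else 0)"
| "mat_pow V M (Suc k) x y = (\<Sum>z\<in>V. M x z * mat_pow V M k z y)"

definition mat_exp :: "'a set \<Rightarrow> ('a \<Rightarrow> 'a \<Rightarrow> complex) \<Rightarrow> 'a \<Rightarrow> 'a \<Rightarrow> complex" where
  "mat_exp V M x y = (\<Sum>k. mat_pow V M k x y / of_nat (fact k))"

definition ctqw_U :: "'a set \<Rightarrow> ('a \<Rightarrow> 'a \<Rightarrow> bool) \<Rightarrow> real \<Rightarrow> 'a \<Rightarrow> 'a \<Rightarrow> complex" where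
  "ctqw_U V E t = mat_exp V (\<lambda>x y. \<i> * complex_of_real t * laplacian V E x y)"

definition ctqw_prob :: "'a set \<Rightarrow> ('a \<Rightarrow> 'a \<Rightarrow> bool) \<Rightarrow> real \<Rightarrow> 'a \<Rightarrow> 'a \<Rightarrow> real" where
  "ctqw_prob V E t x y = (cmod (ctqw_U V E t x y))\<^sup>2"

definition is_clique :: "'a set \<Rightarrow> ('a \<Rightarrow> 'a \<Rightarrow> bool) \<Rightarrow> 'a set \<Rightarrow> bool" where
  "is_clique V E C \<longleftrightarrow> C \<subseteq> V \<and> (\<forall>x\<in>C. \<forall>y\<in>C. x \<noteq> y \<longrightarrow> E x y)"

definition gateway_vertices :: "'a set \<Rightarrow> ('a \<Rightarrow> 'a \<Rightarrow> bool) \<Rightarrow> 'a set \<Rightarrow> 'a set" where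
  "gateway_vertices V E C = {v \<in> C. \<exists>w \<in> V - C. E v w}"

definition non_gateway_vertices :: "'a set \<Rightarrow> ('a \<Rightarrow> 'a \<Rightarrow> bool) \<Rightarrow> 'a set \<Rightarrow> 'a set" where
  "non_gateway_vertices V E C = C - gateway_vertices V E C"

end

theory Submission
  imports Defs
begin

(*
  Let x be a non-gateway vertex of a clique C in a simple graph, S the set of non-gateway
  vertices of C, and U = exp(i t L) the walk operator.  Every non-gateway vertex z is adjacent
  exactly to C - {z}, so for x, y in S the vector e_x - e_y is an eigenvector of the Laplacian L
  with eigenvalue |C|.  Hence U_xx - U_xy = e := exp(i t |C|) for all y in S - {x}.  Since L is
  real symmetric, U is unitary and its row x has norm 1, which gives
      |U_xx|^2 + (|S| - 1) |U_xx - e|^2 <= 1.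
  Thus |U_xx - e| <= 1/sqrt(|S| - 1), and as |e| = 1 the return probability |U_xx|^2 lies
  between 1 - 2/sqrt(|S| - 1) and 1; letting |S| tend to infinity proves the theorem.
*)

section \<open>Matrix powers on a finite index set\<close>

lemma mat_pow_add:
  assumes "finite V" "x \<in> V"
  shows "mat_pow V M (k + l) x z = (\<Sum>y\<in>V. mat_pow V M k x y * mat_pow V M l y z)"
  using assms(2)
proof (induction k arbitrary: x)
  case 0
  then show ?case using assms(1) by (simp add: sum.delta if_distrib[of "\<lambda>u. u * _"] cong: if_cong)
next
  case (Suc k)
  let ?P = "mat_pow V M"
  have "?P (Suc k + l) x z = (\<Sum>w\<in>V. M x w * (\<Sum>y\<in>V. ?P k w y * ?P l y z))"
    using Suc.IH by simp
  also have "\<dots> = (\<Sum>w\<in>V. \<Sum>y\<in>V. M x w * (?P k w y * ?P l y z))"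
    by (simp add: sum_distrib_left)
  also have "\<dots> = (\<Sum>y\<in>V. \<Sum>w\<in>V. M x w * (?P k w y * ?P l y z))"
    by (rule sum.swap)
  also have "\<dots> = (\<Sum>y\<in>V. (\<Sum>w\<in>V. M x w * ?P k w y) * ?P l y z)"
    by (simp add: sum_distrib_right mult.assoc)
  finally show ?case by simp
qed

lemma mat_pow_sym:
  assumes "finite V" "\<And>a b. a \<in> V \<Longrightarrow> b \<in> V \<Longrightarrow> M a b = M b a"
  shows "a \<in> V \<Longrightarrow> b \<in> V \<Longrightarrow> mat_pow V M k a b = mat_pow V M k b a"
proof (induction k arbitrary: a b)
  case 0
  then show ?case by auto
next
  case (Suc k)
  have M1: "mat_pow V M 1 z a = M z a" for z
    using assms(1) Suc.prems(1) by (simp add: if_distrib sum.delta' cong: if_cong)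
  have "mat_pow V M (Suc k) a b = (\<Sum>z\<in>V. mat_pow V M k b z * M z a)"
    using Suc by (auto intro!: sum.cong simp: assms(2) mult.commute)
  also have "\<dots> = mat_pow V M (k + 1) b a"
    using mat_pow_add[OF assms(1) Suc.prems(2), of M k 1 a] by (simp only: M1)
  finally show ?case by simp
qed

lemma mat_pow_cnj:
  assumes "\<And>a b. cnj (M a b) = M a b"
  shows "cnj (mat_pow V M k a b) = mat_pow V M k a b"
  by (induction k arbitrary: a b) (auto simp: assms)

lemma mat_pow_norm_bound:
  assumes "\<And>a b. norm (M a b) \<le> B" "B \<ge> 0"
  shows "norm (mat_pow V M k a b) \<le> (B * card V) ^ k"
proof (induction k arbitrary: a b)
  case 0
  then show ?case by auto
next
  case (Suc k)
  have "norm (mat_pow V M (Suc k) a b) \<le> (\<Sum>z\<in>V. norm (M a z * mat_pow V M k z b))"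
    by (simp add: sum_norm_le)
  also have "\<dots> \<le> (\<Sum>z\<in>V. B * (B * card V) ^ k)"
    by (intro sum_mono) (auto simp: norm_mult intro!: mult_mono assms Suc.IH)
  also have "\<dots> = (B * card V) ^ Suc k" by simp
  finally show ?case .
qed

lemma mat_pow_scale:
  "mat_pow V (\<lambda>a b. c * M a b) k x y = c ^ k * mat_pow V M k x y"
  by (induction k arbitrary: x y) (auto simp: sum_distrib_left mult_ac)

lemma mat_pow_eigen_diff:
  assumes fin: "finite V" and xV: "x \<in> V" and yV: "y \<in> V"
    and ev: "\<And>a. M a x - M a y = lam * ((if a = x then 1 else 0) - (if a = y then 1 else 0))"
  shows "mat_pow V M k a x - mat_pow V M k a y
       = lam ^ k * ((if a = x then 1 else 0) - (if a = y then 1 else 0))"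
proof (induction k arbitrary: a)
  case 0
  then show ?case by simp
next
  case (Suc k)
  have "mat_pow V M (Suc k) a x - mat_pow V M (Suc k) a y
      = (\<Sum>z\<in>V. M a z * (mat_pow V M k z x - mat_pow V M k z y))"
    by (simp add: sum_subtractf right_diff_distrib)
  also have "\<dots> = (\<Sum>z\<in>V. lam ^ k * ((if z = x then M a z else 0) - (if z = y then M a z else 0)))"
    by (intro sum.cong refl) (simp add: Suc.IH algebra_simps)
  also have "\<dots> = lam ^ k * (M a x - M a y)"
    using fin xV yV by (simp add: sum_distrib_left[symmetric] sum_subtractf sum.delta')
  also have "\<dots> = lam ^ Suc k * ((if a = x then 1 else 0) - (if a = y then 1 else 0))"
    by (simp add: ev)
  finally show ?case .
qed

section \<open>The exponential of a scaled matrix\<close>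

lemma mat_exp_scaled:
  "mat_exp V (\<lambda>a b. c * M a b) x y = (\<Sum>k. c ^ k * mat_pow V M k x y / of_nat (fact k))"
  unfolding mat_exp_def mat_pow_scale ..

lemma summable_norm_exp_series:
  fixes c :: complex
  assumes "\<And>k. norm (f k) \<le> R ^ k"
  shows "summable (\<lambda>k. norm (c ^ k * f k / of_nat (fact k)))"
proof (rule summable_comparison_test')
  show "summable (\<lambda>k. (norm c * R) ^ k / fact k)"
    using exp_converges[of "norm c * R"] by (simp add: sums_iff divide_inverse mult.commute)
  fix k :: nat
  have "norm (c ^ k * f k / of_nat (fact k)) = norm c ^ k * norm (f k) / fact k"
    by (simp add: norm_mult norm_divide norm_power)
  also have "\<dots> \<le> norm c ^ k * R ^ k / fact k"
    by (intro divide_right_mono mult_left_mono assms) auto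
  finally show "norm (norm (c ^ k * f k / of_nat (fact k))) \<le> (norm c * R) ^ k / fact k"
    by (simp add: power_mult_distrib)
qed

lemma binomial_fact_sum:
  fixes c d :: complex
  shows "(\<Sum>i\<le>n. c ^ i * d ^ (n - i) / (of_nat (fact i) * of_nat (fact (n - i))))
         = (c + d) ^ n / of_nat (fact n)"
proof -
  have "(c + d) ^ n / of_nat (fact n)
      = (\<Sum>i\<le>n. of_nat (n choose i) * c ^ i * d ^ (n - i) / of_nat (fact n))"
    by (simp add: binomial_ring sum_divide_distrib)
  also have "\<dots> = (\<Sum>i\<le>n. c ^ i * d ^ (n - i) / (of_nat (fact i) * of_nat (fact (n - i))))"
  proof (intro sum.cong refl)
    fix i assume "i \<in> {..n}"
    then have "(of_nat (n choose i) :: complex) = fact n / (fact i * fact (n - i))"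
      by (simp add: binomial_fact)
    then show "of_nat (n choose i) * c ^ i * d ^ (n - i) / of_nat (fact n)
       = c ^ i * d ^ (n - i) / (of_nat (fact i) * of_nat (fact (n - i)))"
      by (simp add: field_simps)
  qed
  finally show ?thesis by simp
qed

(* exp(cM) exp(dM) = exp((c+d)M), entrywise: Cauchy product of the two series and the
   binomial theorem, using M^i M^j = M^(i+j). *)
lemma mat_exp_mult:
  assumes fin: "finite V" and xV: "x \<in> V"
    and bd: "\<And>a b. norm (M a b) \<le> B" and B0: "B \<ge> 0"
  shows "(\<Sum>y\<in>V. mat_exp V (\<lambda>a b. c * M a b) x y * mat_exp V (\<lambda>a b. d * M a b) y z)
       = mat_exp V (\<lambda>a b. (c + d) * M a b) x z"
proof -
  define P where "P = mat_pow V M"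
  define f where "f y = (\<lambda>k. c ^ k * P k x y / of_nat (fact k))" for y
  define g where "g y = (\<lambda>k. d ^ k * P k y z / of_nat (fact k))" for y
  have Pb: "norm (P k u v) \<le> (B * card V) ^ k" for k u v
    unfolding P_def by (rule mat_pow_norm_bound[OF bd B0])
  have sf: "summable (\<lambda>k. norm (f y k))" for y
    unfolding f_def by (rule summable_norm_exp_series[OF Pb])
  have sg: "summable (\<lambda>k. norm (g y k))" for y
    unfolding g_def by (rule summable_norm_exp_series[OF Pb])
  have coeff: "(\<Sum>y\<in>V. \<Sum>i\<le>n. f y i * g y (n - i)) = (c + d) ^ n * P n x z / of_nat (fact n)" for n
  proof -
    have "(\<Sum>y\<in>V. \<Sum>i\<le>n. f y i * g y (n - i))
        = (\<Sum>i\<le>n. c ^ i * d ^ (n - i) / (of_nat (fact i) * of_nat (fact (n - i)))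
                     * (\<Sum>y\<in>V. P i x y * P (n - i) y z))"
      unfolding f_def g_def by (subst sum.swap) (simp add: sum_distrib_left sum_divide_distrib mult_ac)
    also have "\<dots> = (\<Sum>i\<le>n. c ^ i * d ^ (n - i) / (of_nat (fact i) * of_nat (fact (n - i))) * P n x z)"
      by (intro sum.cong refl) (simp add: P_def mat_pow_add[OF fin xV, symmetric])
    also have "\<dots> = (c + d) ^ n / of_nat (fact n) * P n x z"
      by (simp only: sum_distrib_right[symmetric] binomial_fact_sum)
    finally show ?thesis by simp
  qed
  have "(\<Sum>y\<in>V. suminf (f y) * suminf (g y)) = (\<Sum>y\<in>V. \<Sum>n. \<Sum>i\<le>n. f y i * g y (n - i))"
    using Cauchy_product[OF sf sg] by simp
  also have "\<dots> = (\<Sum>n. \<Sum>y\<in>V. \<Sum>i\<le>n. f y i * g y (n - i))"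
    by (rule suminf_sum[symmetric]) (rule summable_Cauchy_product[OF sf sg])
  also have "\<dots> = (\<Sum>n. (c + d) ^ n * P n x z / of_nat (fact n))"
    by (simp only: coeff)
  finally show ?thesis
    unfolding mat_exp_scaled f_def g_def P_def .
qed

lemma mat_exp_cnj:
  assumes real: "\<And>a b. cnj (M a b) = M a b"
    and bd: "\<And>a b. norm (M a b) \<le> B" and B0: "B \<ge> 0"
  shows "cnj (mat_exp V (\<lambda>a b. c * M a b) x y) = mat_exp V (\<lambda>a b. cnj c * M a b) x y"
proof -
  let ?f = "\<lambda>k. c ^ k * mat_pow V M k x y / of_nat (fact k)"
  have "summable ?f"
    by (rule summable_norm_cancel[OF summable_norm_exp_series[OF mat_pow_norm_bound[OF bd B0]]])
  then have "(\<lambda>k. cnj (?f k)) sums cnj (suminf ?f)"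
    by (simp only: sums_cnj summable_sums)
  moreover have "(\<lambda>k. cnj (?f k)) = (\<lambda>k. cnj c ^ k * mat_pow V M k x y / of_nat (fact k))"
    using mat_pow_cnj[of M, OF real] by simp
  ultimately have "(\<lambda>k. cnj c ^ k * mat_pow V M k x y / of_nat (fact k)) sums cnj (suminf ?f)"
    by simp
  then show ?thesis
    unfolding mat_exp_scaled by (rule sums_unique)
qed

(* Unitarity of exp(itM) for real symmetric M, in the form: each row has Euclidean norm 1.
   Indeed the row sum equals (exp(itM) exp(-itM))_xx = 1. *)
lemma mat_exp_row_unit:
  fixes t :: real
  assumes fin: "finite V" and xV: "x \<in> V"
    and sym: "\<And>a b. a \<in> V \<Longrightarrow> b \<in> V \<Longrightarrow> M a b = M b a"
    and real: "\<And>a b. cnj (M a b) = M a b"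
    and bd: "\<And>a b. norm (M a b) \<le> B" and B0: "B \<ge> 0"
  shows "(\<Sum>y\<in>V. (cmod (mat_exp V (\<lambda>a b. (\<i> * t) * M a b) x y))\<^sup>2) = 1"
proof -
  let ?U = "\<lambda>c. mat_exp V (\<lambda>a b. c * M a b)"
  have U_sym: "?U c a b = ?U c b a" if "a \<in> V" "b \<in> V" for c a b
    using mat_pow_sym[OF fin sym that] by (simp add: mat_exp_scaled)
  have "complex_of_real (\<Sum>y\<in>V. (cmod (?U (\<i> * t) x y))\<^sup>2)
      = (\<Sum>y\<in>V. ?U (\<i> * t) x y * cnj (?U (\<i> * t) x y))"
    by (simp only: of_real_sum complex_norm_square)
  also have "\<dots> = (\<Sum>y\<in>V. ?U (\<i> * t) x y * ?U (cnj (\<i> * t)) y x)"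
    using xV by (intro sum.cong refl) (simp add: mat_exp_cnj[OF real bd B0] U_sym)
  also have "\<dots> = ?U (\<i> * t + cnj (\<i> * t)) x x"
    by (rule mat_exp_mult[OF fin xV bd B0])
  also have "\<dots> = (\<Sum>k. mat_pow V M k x x / of_nat (fact k) * 0 ^ k)"
    unfolding mat_exp_scaled by (intro suminf_cong) (simp add: complex_eq_iff power_0_left)
  also have "\<dots> = 1"
    by (subst powser_zero) simp
  finally show ?thesis
    using of_real_eq_1_iff by blast
qed

lemma mat_exp_eigen_diff:
  assumes fin: "finite V" and xV: "x \<in> V" and yV: "y \<in> V" and xy: "x \<noteq> y"
    and ev: "\<And>a. M a x - M a y = lam * ((if a = x then 1 else 0) - (if a = y then 1 else 0))"
    and bd: "\<And>a b. norm (M a b) \<le> B" and B0: "B \<ge> 0"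
  shows "mat_exp V (\<lambda>a b. c * M a b) x x - mat_exp V (\<lambda>a b. c * M a b) x y = exp (c * lam)"
proof -
  let ?f = "\<lambda>u k. c ^ k * mat_pow V M k x u / of_nat (fact k)"
  have sf: "summable (?f u)" for u
    by (rule summable_norm_cancel[OF summable_norm_exp_series[OF mat_pow_norm_bound[OF bd B0]]])
  have "?f x k - ?f y k = (c * lam) ^ k / of_nat (fact k)" for k
  proof -
    have "?f x k - ?f y k = c ^ k * (mat_pow V M k x x - mat_pow V M k x y) / of_nat (fact k)"
      by (simp add: diff_divide_distrib right_diff_distrib)
    then show ?thesis
      using mat_pow_eigen_diff[OF fin xV yV ev, of k x] xy by (simp add: power_mult_distrib)
  qed
  then have "(\<lambda>k. ?f x k - ?f y k) sums exp (c * lam)"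
    using exp_converges[of "c * lam"] by (simp add: scaleR_conv_of_real divide_inverse mult.commute)
  moreover have "(\<lambda>k. ?f x k - ?f y k) sums (suminf (?f x) - suminf (?f y))"
    by (intro sums_diff summable_sums sf)
  ultimately show ?thesis
    by (simp add: mat_exp_scaled sums_iff)
qed

section \<open>The Laplacian of a graph with a clique\<close>

lemma laplacian_sym: "simple_graph V E \<Longrightarrow> laplacian V E a b = laplacian V E b a"
  unfolding laplacian_def simple_graph_def by auto

lemma laplacian_cnj: "cnj (laplacian V E a b) = laplacian V E a b"
  unfolding laplacian_def by simp

lemma laplacian_norm_bound:
  assumes "simple_graph V E"
  shows "norm (laplacian V E a b) \<le> real (card V) + 1"
proof -
  have "degree V E a \<le> card V"
    using assms unfolding degree_def simple_graph_def by (intro card_mono) auto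
  moreover have "\<not> E a a" using assms by (simp add: simple_graph_def)
  ultimately show ?thesis unfolding laplacian_def by (auto simp: norm_of_nat)
qed

lemma non_gateway_adjacent:
  assumes g: "simple_graph V E" and cl: "is_clique V E C"
    and zS: "z \<in> non_gateway_vertices V E C"
  shows "E z w \<longleftrightarrow> w \<in> C \<and> w \<noteq> z"
proof
  assume zw: "E z w"
  then have wV: "w \<in> V" and "w \<noteq> z"
    using g by (auto simp: simple_graph_def)
  moreover have "w \<in> C"
  proof (rule ccontr)
    assume "w \<notin> C"
    then have "z \<in> gateway_vertices V E C"
      using zS wV zw by (auto simp: gateway_vertices_def non_gateway_vertices_def)
    then show False
      using zS by (simp add: non_gateway_vertices_def)
  qed
  ultimately show "w \<in> C \<and> w \<noteq> z" by simp
next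
  assume "w \<in> C \<and> w \<noteq> z"
  then show "E z w"
    using cl zS by (auto simp: is_clique_def non_gateway_vertices_def)
qed

lemma non_gateway_degree:
  assumes g: "simple_graph V E" and cl: "is_clique V E C"
    and zS: "z \<in> non_gateway_vertices V E C"
  shows "degree V E z = card C - 1"
proof -
  have "C \<subseteq> V" "z \<in> C"
    using cl zS by (auto simp: is_clique_def non_gateway_vertices_def)
  then have "{w \<in> V. E z w} = C - {z}"
    using non_gateway_adjacent[OF g cl zS] by auto
  then show ?thesis
    using \<open>z \<in> C\<close> by (simp add: degree_def)
qed

(* For non-gateway vertices x, y of C, e_x - e_y is an eigenvector of L with eigenvalue |C|:
   the columns x and y of L differ only in the rows x and y. *)
lemma laplacian_clique_eigen:
  assumes g: "simple_graph V E" and cl: "is_clique V E C"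
    and xS: "x \<in> non_gateway_vertices V E C" and yS: "y \<in> non_gateway_vertices V E C"
  shows "laplacian V E a x - laplacian V E a y
       = of_nat (card C) * ((if a = x then 1 else 0) - (if a = y then 1 else 0))"
proof -
  have xC: "x \<in> C" and yC: "y \<in> C"
    using xS yS by (auto simp: non_gateway_vertices_def)
  have "finite C"
    using g cl finite_subset by (auto simp: simple_graph_def is_clique_def)
  then have C1: "card C \<ge> 1"
    using xC by (metis One_nat_def Suc_leI card_gt_0_iff empty_iff)
  have sym: "E u v \<longleftrightarrow> E v u" and irr: "\<not> E u u" for u v
    using g by (auto simp: simple_graph_def)
  note adj_x = non_gateway_adjacent[OF g cl xS] and adj_y = non_gateway_adjacent[OF g cl yS]
  consider "x = y" | "x \<noteq> y" "a = x" | "x \<noteq> y" "a = y" | "a \<noteq> x" "a \<noteq> y"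
    by blast
  then show ?thesis
  proof cases
    case 2
    then show ?thesis
      using adj_x[of y] yC non_gateway_degree[OF g cl xS] C1 irr
      by (simp add: laplacian_def of_nat_diff)
  next
    case 3
    then show ?thesis
      using adj_y[of x] xC non_gateway_degree[OF g cl yS] C1 irr
      by (simp add: laplacian_def of_nat_diff)
  next
    case 4
    then have "E a x \<longleftrightarrow> E a y"
      using adj_x[of a] adj_y[of a] sym by blast
    then show ?thesis
      using 4 by (simp add: laplacian_def)
  qed simp
qed

section \<open>The return probability of the walk\<close>

lemma ctqw_row_unit:
  assumes g: "simple_graph V E" and xV: "x \<in> V"
  shows "(\<Sum>y\<in>V. (cmod (ctqw_U V E t x y))\<^sup>2) = 1"
  unfolding ctqw_U_def
  using g xV laplacian_norm_bound[OF g] laplacian_sym[OF g]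
  by (intro mat_exp_row_unit[where B = "real (card V) + 1"] laplacian_cnj)
    (auto simp: simple_graph_def)

lemma ctqw_prob_le_one:
  assumes g: "simple_graph V E" and xV: "x \<in> V"
  shows "ctqw_prob V E t x x \<le> 1"
proof -
  have "finite V" using g by (simp add: simple_graph_def)
  then have "(cmod (ctqw_U V E t x x))\<^sup>2 \<le> (\<Sum>y\<in>V. (cmod (ctqw_U V E t x y))\<^sup>2)"
    using xV by (intro member_le_sum) auto
  then show ?thesis
    using ctqw_row_unit[OF g xV] by (simp add: ctqw_prob_def)
qed

lemma ctqw_clique_difference:
  assumes g: "simple_graph V E" and cl: "is_clique V E C"
    and xS: "x \<in> non_gateway_vertices V E C" and yS: "y \<in> non_gateway_vertices V E C"
    and xy: "x \<noteq> y"
  shows "ctqw_U V E t x y = ctqw_U V E t x x - exp (\<i> * t * of_nat (card C))"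
proof -
  have "x \<in> V" "y \<in> V"
    using cl xS yS by (auto simp: is_clique_def non_gateway_vertices_def)
  then have "ctqw_U V E t x x - ctqw_U V E t x y = exp (\<i> * t * of_nat (card C))"
    unfolding ctqw_U_def using g xy
    by (intro mat_exp_eigen_diff[where B = "real (card V) + 1"]
        laplacian_clique_eigen[OF g cl xS yS] laplacian_norm_bound[OF g])
      (auto simp: simple_graph_def)
  then show ?thesis by (simp add: algebra_simps)
qed

lemma ctqw_return_amplitude_estimate:
  assumes g: "simple_graph V E" and cl: "is_clique V E C"
    and xS: "x \<in> non_gateway_vertices V E C"
  shows "(cmod (ctqw_U V E t x x))\<^sup>2
       + (real (card (non_gateway_vertices V E C)) - 1)
         * (cmod (ctqw_U V E t x x - exp (\<i> * t * of_nat (card C))))\<^sup>2 \<le> 1"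
proof -
  let ?S = "non_gateway_vertices V E C" and ?U = "ctqw_U V E t"
  let ?d = "cmod (?U x x - exp (\<i> * t * of_nat (card C)))"
  have fin: "finite V" using g by (simp add: simple_graph_def)
  have SV: "?S \<subseteq> V" using cl by (auto simp: is_clique_def non_gateway_vertices_def)
  have finS: "finite ?S" using fin SV finite_subset by blast
  have xV: "x \<in> V" using xS SV by auto
  have "card ?S \<ge> 1"
    using finS xS by (metis One_nat_def Suc_leI card_gt_0_iff empty_iff)
  have "(\<Sum>y\<in>?S - {x}. (cmod (?U x y))\<^sup>2) = (\<Sum>y\<in>?S - {x}. ?d\<^sup>2)"
    by (intro sum.cong refl) (subst ctqw_clique_difference[OF g cl xS]; auto)
  also have "\<dots> = (real (card ?S) - 1) * ?d\<^sup>2"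
    using finS xS \<open>card ?S \<ge> 1\<close> by (simp add: of_nat_diff)
  finally have off_diag: "(\<Sum>y\<in>?S - {x}. (cmod (?U x y))\<^sup>2) = (real (card ?S) - 1) * ?d\<^sup>2" .
  have "(cmod (?U x x))\<^sup>2 + (\<Sum>y\<in>?S - {x}. (cmod (?U x y))\<^sup>2) = (\<Sum>y\<in>?S. (cmod (?U x y))\<^sup>2)"
    by (rule sum.remove[OF finS xS, symmetric])
  also have "\<dots> \<le> (\<Sum>y\<in>V. (cmod (?U x y))\<^sup>2)"
    by (rule sum_mono2[OF fin SV]) auto
  also have "\<dots> = 1"
    by (rule ctqw_row_unit[OF g xV])
  finally show ?thesis
    unfolding off_diag .
qed

lemma norm_square_lower_bound:
  fixes z e :: complex
  assumes e: "norm e = 1"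
  shows "1 - 2 * norm (z - e) \<le> (norm z)\<^sup>2"
proof (cases "norm (z - e) \<le> 1")
  case True
  have "norm e \<le> norm (z - e) + norm z"
    by (metis diff_add_cancel norm_minus_commute norm_triangle_ineq)
  then have "(1 - norm (z - e))\<^sup>2 \<le> (norm z)\<^sup>2"
    using e True by (intro power_mono) auto
  moreover have "1 - 2 * norm (z - e) \<le> (1 - norm (z - e))\<^sup>2"
    by (simp add: power2_eq_square algebra_simps)
  ultimately show ?thesis by linarith
next
  case False
  then show ?thesis
    using zero_le_power2[of "norm z"] by linarith
qed

lemma ctqw_return_lower_bound:
  assumes g: "simple_graph V E" and cl: "is_clique V E C"
    and xS: "x \<in> non_gateway_vertices V E C"
    and two: "2 \<le> card (non_gateway_vertices V E C)"
  shows "1 - 2 * sqrt (1 / (real (card (non_gateway_vertices V E C)) - 1)) \<le> ctqw_prob V E t x x"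
proof -
  let ?s = "real (card (non_gateway_vertices V E C))" and ?U = "ctqw_U V E t"
  let ?e = "exp (\<i> * t * of_nat (card C))"
  have "(?s - 1) * (cmod (?U x x - ?e))\<^sup>2 \<le> 1"
    using ctqw_return_amplitude_estimate[OF g cl xS, of t] zero_le_power2[of "cmod (?U x x)"]
    by linarith
  then have "(cmod (?U x x - ?e))\<^sup>2 \<le> 1 / (?s - 1)"
    using two by (simp add: field_simps mult.commute)
  then have "cmod (?U x x - ?e) \<le> sqrt (1 / (?s - 1))"
    by (rule real_le_rsqrt)
  moreover have "1 - 2 * cmod (?U x x - ?e) \<le> ctqw_prob V E t x x"
    unfolding ctqw_prob_def by (rule norm_square_lower_bound) (simp add: norm_exp_eq_Re)
  ultimately show ?thesis by linarith
qed

lemma tendsto_one_minus_inverse_sqrt: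
  fixes s :: "nat \<Rightarrow> nat"
  assumes "filterlim s at_top sequentially"
  shows "(\<lambda>m. 1 - 2 * sqrt (1 / (real (s m) - 1))) \<longlonglongrightarrow> 1"
proof -
  have "filterlim (\<lambda>m. real (s m)) at_top sequentially"
    using filterlim_compose[OF filterlim_real_sequentially assms] by (simp add: o_def)
  then have "filterlim (\<lambda>m. -1 + real (s m)) at_top sequentially"
    by (rule filterlim_tendsto_add_at_top[OF tendsto_const])
  then have "filterlim (\<lambda>m. real (s m) - 1) at_infinity sequentially"
    by (intro filterlim_at_top_imp_at_infinity) simp
  then have "(\<lambda>m. 1 / (real (s m) - 1)) \<longlonglongrightarrow> 0"
    by (rule tendsto_divide_0[OF tendsto_const])
  then have "(\<lambda>m. 1 - 2 * sqrt (1 / (real (s m) - 1))) \<longlonglongrightarrow> 1 - 2 * sqrt 0"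
    by (intro tendsto_intros)
  then show ?thesis by simp
qed

(* The theorem, by squeezing the return probability between the lower bound above and 1;
   it holds for every real t. *)
theorem proposition3p2:
  fixes V :: "nat \<Rightarrow> 'a set" and E :: "nat \<Rightarrow> 'a \<Rightarrow> 'a \<Rightarrow> bool"
    and C :: "nat \<Rightarrow> 'a set" and x :: "nat \<Rightarrow> 'a" and t :: real
  assumes graphs: "\<And>m. simple_graph (V m) (E m)"
    and cliques: "\<And>m. is_clique (V m) (E m) (C m)"
    and card_S: "filterlim (\<lambda>m. card (non_gateway_vertices (V m) (E m) (C m))) at_top sequentially"
    and x_in: "\<And>m. x m \<in> non_gateway_vertices (V m) (E m) (C m)"
    and t_nonneg: "t \<ge> 0"
  shows "(\<lambda>m. ctqw_prob (V m) (E m) t (x m) (x m)) \<longlonglongrightarrow> 1"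
proof (rule tendsto_sandwich)
  have "eventually (\<lambda>m. 2 \<le> card (non_gateway_vertices (V m) (E m) (C m))) sequentially"
    using card_S unfolding filterlim_at_top by blast
  then show "eventually (\<lambda>m. 1 - 2 * sqrt (1 / (real (card (non_gateway_vertices (V m) (E m) (C m))) - 1))
      \<le> ctqw_prob (V m) (E m) t (x m) (x m)) sequentially"
    by (rule eventually_mono) (rule ctqw_return_lower_bound[OF graphs cliques x_in])
  have "x m \<in> V m" for m
    using x_in[of m] cliques[of m] by (auto simp: is_clique_def non_gateway_vertices_def)
  then show "eventually (\<lambda>m. ctqw_prob (V m) (E m) t (x m) (x m) \<le> 1) sequentially"
    using ctqw_prob_le_one[OF graphs] by simp
  show "(\<lambda>m. 1 - 2 * sqrt (1 / (real (card (non_gateway_vertices (V m) (E m) (C m))) - 1))) \<longlonglongrightarrow> 1"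
    by (rule tendsto_one_minus_inverse_sqrt[OF card_S])
qed (rule tendsto_const)

end
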